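(* For every integer $k\geq 0$ and $n=3^{k}\cdot 7$, there exists a regular $n$-tournament that is not $(n-1)$-spectrally monomorphic.
   Context: An $n$-tournament is a digraph on $n$ vertices in which every pair of distinct vertices is joined by exactly one arc. Its adjacency matrix $A=(a_{ij})$ (w.r.t. an ordering $v_1,\dots,v_n$) has $a_{ij}=1$ if $v_i$ dominates $v_j$ and $0$ otherwise. A tournament is regular if all its vertices have the same out-degree (necessarily $(n-1)/2$). A tournament is $k$-spectrally monomorphic if all the $k\times k$ principal submatrices of its adjacency matrix have the same characteristic polynomial $\det(zI-M)$. *)

theory Defs
  imports "Jordan_Normal_Form.Char_Poly" "Jordan_Normal_Form.DL_Submatrix"
begin

text \<open>An n-tournament on the vertex set {0..<n}: T i j means vertex i dominates vertex j.\<close>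
definition tournament :: "nat \<Rightarrow> (nat \<Rightarrow> nat \<Rightarrow> bool) \<Rightarrow> bool" where
  "tournament n T \<longleftrightarrow>
     (\<forall>i<n. \<not> T i i) \<and>
     (\<forall>i<n. \<forall>j<n. i \<noteq> j \<longrightarrow> (T i j \<longleftrightarrow> \<not> T j i))"

definition out_degree :: "nat \<Rightarrow> (nat \<Rightarrow> nat \<Rightarrow> bool) \<Rightarrow> nat \<Rightarrow> nat" where
  "out_degree n T i = card {j. j < n \<and> T i j}"

definition regular_tournament :: "nat \<Rightarrow> (nat \<Rightarrow> nat \<Rightarrow> bool) \<Rightarrow> bool" where
  "regular_tournament n T \<longleftrightarrow> tournament n T \<and>
     (\<exists>d. \<forall>i<n. out_degree n T i = d)"

definition adj_matrix :: "nat \<Rightarrow> (nat \<Rightarrow> nat \<Rightarrow> bool) \<Rightarrow> real mat" where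
  "adj_matrix n T = mat n n (\<lambda>(i,j). if T i j then 1 else 0)"

definition spectrally_monomorphic :: "nat \<Rightarrow> nat \<Rightarrow> (nat \<Rightarrow> nat \<Rightarrow> bool) \<Rightarrow> bool" where
  "spectrally_monomorphic k n T \<longleftrightarrow>
     (\<forall>S S'. S \<subseteq> {0..<n} \<longrightarrow> card S = k \<longrightarrow> S' \<subseteq> {0..<n} \<longrightarrow> card S' = k \<longrightarrow>
        char_poly (submatrix (adj_matrix n T) S S) = char_poly (submatrix (adj_matrix n T) S' S'))"

end

theory Submission
  imports Defs "Jordan_Normal_Form.Schur_Decomposition"
begin

text \<open>In an oriented graph a closed walk of length 4 never visits a vertex twice, so deleting a
  vertex \<open>v\<close> destroys exactly \<open>4 c(v)\<close> closed 4-walks, where \<open>c(v)\<close> counts those starting at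
  \<open>v\<close>. The number of closed 4-walks is \<open>tr(A\<^sup>4)\<close>, which the characteristic polynomial
  determines; so in an \<open>(n-1)\<close>-spectrally monomorphic tournament \<open>c\<close> is constant.
  For \<open>n = 7m\<close> with \<open>m = 3\<^sup>k\<close> odd, replace every vertex of the rotational \<open>m\<close>-tournament by a
  copy of a regular 7-tournament on which \<open>c\<close> is not constant. The result is regular, and
  two vertices of one copy differ in \<open>c\<close> exactly as they do in the 7-tournament, because
  walks leaving the copy see its vertices only through their (equal) in- and out-degrees.\<close>

section \<open>Traces of powers and the characteristic polynomial\<close>

definition trace :: "'a::comm_ring_1 mat \<Rightarrow> 'a" where
  "trace A = (\<Sum>i<dim_row A. A $$ (i,i))"

lemma trace_mult_comm:
  assumes "A \<in> carrier_mat n m" "B \<in> carrier_mat m n"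
  shows "trace (A * B) = trace (B * A)"
proof -
  have "trace (A * B) = (\<Sum>i<n. \<Sum>j<m. A $$ (i,j) * B $$ (j,i))"
    using assms by (simp add: trace_def scalar_prod_def atLeast0LessThan)
  also have "\<dots> = (\<Sum>j<m. \<Sum>i<n. B $$ (j,i) * A $$ (i,j))"
    by (subst sum.swap) (simp add: mult.commute)
  also have "\<dots> = trace (B * A)"
    using assms by (simp add: trace_def scalar_prod_def atLeast0LessThan)
  finally show ?thesis .
qed

lemma trace_similar_mat_wit:
  assumes "A \<in> carrier_mat n n" "similar_mat_wit A B P Q"
  shows "trace A = trace B"
proof -
  note car = similar_mat_witD2(5-7)[OF assms]
  have "trace A = trace (P * (B * Q))"
    using car by (simp add: similar_mat_witD2(3)[OF assms])
  also have "\<dots> = trace (B * Q * P)"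
    using car by (simp add: trace_mult_comm[of P n n "B * Q"])
  also have "\<dots> = trace B"
    using car by (simp add: similar_mat_witD2(2)[OF assms])
  finally show ?thesis .
qed

lemma (in comm_ring_hom) trace_hom:
  "A \<in> carrier_mat n n \<Longrightarrow> trace (mat\<^sub>h A) = hom (trace A)"
  by (simp add: trace_def hom_sum)

lemma upper_triangular_mult:
  assumes A: "A \<in> carrier_mat n n" "upper_triangular A"
    and B: "B \<in> carrier_mat n n" "upper_triangular B"
  shows "upper_triangular (A * B)" "\<And>i. i < n \<Longrightarrow> (A * B) $$ (i,i) = A $$ (i,i) * B $$ (i,i)"
proof -
  have zero: "A $$ (i,l) * B $$ (l,j) = 0" if "i < n" "l < n" "j < n" "j < i \<or> l \<noteq> i \<and> j = i" for i j l
    using that A B upper_triangularD[of A l i] upper_triangularD[of B j l] by (cases "l < i") auto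
  show "upper_triangular (A * B)"
    using A B zero by (intro upper_triangularI) (auto simp: scalar_prod_def intro!: sum.neutral)
  fix i assume i: "i < n"
  have "(A * B) $$ (i,i) = (\<Sum>l\<in>{0..<n}. A $$ (i,l) * B $$ (l,i))"
    using A B i by (simp add: scalar_prod_def)
  also have "\<dots> = A $$ (i,i) * B $$ (i,i)"
    using i zero by (subst sum.remove[of _ i]) (auto intro!: sum.neutral)
  finally show "(A * B) $$ (i,i) = A $$ (i,i) * B $$ (i,i)" .
qed

lemma upper_triangular_pow:
  assumes A: "A \<in> carrier_mat n n" "upper_triangular A"
  shows "upper_triangular (A ^\<^sub>m k) \<and> (\<forall>i<n. (A ^\<^sub>m k) $$ (i,i) = A $$ (i,i) ^ k)"
proof (induction k)
  case (Suc k)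
  have "A ^\<^sub>m k \<in> carrier_mat n n" using A by simp
  then show ?case
    using Suc upper_triangular_mult[OF _ _ A] by (simp add: power_Suc2 del: power_Suc)
qed (use A in auto)

lemma trace_pow_eq_sum_eigenvalues:
  fixes A :: "complex mat"
  assumes A: "A \<in> carrier_mat n n" and cp: "char_poly A = (\<Prod>e \<leftarrow> es. [:- e, 1:])"
  shows "trace (A ^\<^sub>m k) = (\<Sum>e \<leftarrow> es. e ^ k)"
proof -
  obtain B P Q where schur: "schur_decomposition A es = (B,P,Q)" by (rule prod_cases3)
  note decomp = schur_decomposition[OF A cp schur]
  have B: "B \<in> carrier_mat n n" "upper_triangular B" "diag_mat B = es"
    using decomp similar_mat_witD2(5)[OF A] by blast+
  have "trace (A ^\<^sub>m k) = trace (B ^\<^sub>m k)"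
    using decomp A by (intro trace_similar_mat_wit[of _ n _ P Q] similar_mat_wit_pow) auto
  also have "\<dots> = (\<Sum>i<n. B $$ (i,i) ^ k)"
    using upper_triangular_pow[OF B(1,2)] B(1) by (simp add: trace_def)
  also have "\<dots> = (\<Sum>e \<leftarrow> es. e ^ k)"
    using B by (auto simp: diag_mat_def sum_list_sum_nth atLeast0LessThan)
  finally show ?thesis .
qed

lemma trace_pow_eq_if_char_poly_eq:
  fixes A B :: "real mat"
  assumes A: "A \<in> carrier_mat n n" and B: "B \<in> carrier_mat n n"
    and cp: "char_poly A = char_poly B"
  shows "trace (A ^\<^sub>m k) = trace (B ^\<^sub>m k)"
proof -
  let ?c = "map_mat complex_of_real"
  have cA: "?c A \<in> carrier_mat n n" and cB: "?c B \<in> carrier_mat n n" using A B by auto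
  obtain es where es: "char_poly (?c A) = (\<Prod>e \<leftarrow> es. [:- e, 1:])"
    using char_poly_factorized[OF cA] by blast
  have "char_poly (?c B) = char_poly (?c A)"
    unfolding of_real_hom.char_poly_hom[OF A] of_real_hom.char_poly_hom[OF B] cp ..
  then have "trace ((?c A) ^\<^sub>m k) = trace ((?c B) ^\<^sub>m k)"
    using trace_pow_eq_sum_eigenvalues[OF cA es] trace_pow_eq_sum_eigenvalues[OF cB] es by simp
  then show ?thesis
    unfolding of_real_hom.mat_hom_pow[OF A, symmetric] of_real_hom.mat_hom_pow[OF B, symmetric]
      of_real_hom.trace_hom[OF pow_carrier_mat[OF A]] of_real_hom.trace_hom[OF pow_carrier_mat[OF B]]
    by simp
qed

section \<open>Closed walks of length four\<close>

definition walks2 :: "('a \<Rightarrow> 'a \<Rightarrow> bool) \<Rightarrow> 'a set \<Rightarrow> 'a \<Rightarrow> 'a \<Rightarrow> nat" where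
  "walks2 T V x z = (\<Sum>y\<in>V. of_bool (T x y \<and> T y z))"

definition closed_walks4_at :: "('a \<Rightarrow> 'a \<Rightarrow> bool) \<Rightarrow> 'a set \<Rightarrow> 'a \<Rightarrow> nat" where
  "closed_walks4_at T V v = (\<Sum>y\<in>V. \<Sum>z\<in>V. \<Sum>w\<in>V. of_bool (T v y \<and> T y z \<and> T z w \<and> T w v))"

definition closed_walks4 :: "('a \<Rightarrow> 'a \<Rightarrow> bool) \<Rightarrow> 'a set \<Rightarrow> nat" where
  "closed_walks4 T V = (\<Sum>v\<in>V. closed_walks4_at T V v)"

lemma closed_walks4_at_eq_walks2:
  "closed_walks4_at T V v = (\<Sum>z\<in>V. walks2 T V v z * walks2 T V z v)"
proof -
  have "closed_walks4_at T V v = (\<Sum>z\<in>V. \<Sum>y\<in>V. \<Sum>w\<in>V. of_bool (T v y \<and> T y z) * of_bool (T z w \<and> T w v))"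
    unfolding closed_walks4_at_def by (rule sum.swap[THEN trans]) (simp add: of_bool_conj mult.assoc del: sum_of_bool_eq)
  then show ?thesis
    by (simp add: walks2_def sum_product)
qed

lemma sum_rotate3:
  "(\<Sum>x\<in>A. \<Sum>y\<in>B. \<Sum>z\<in>C. f x y z) = (\<Sum>y\<in>B. \<Sum>z\<in>C. \<Sum>x\<in>A. f x y z :: 'b::comm_monoid_add)"
  by (subst sum.swap) (rule sum.cong[OF refl], rule sum.swap)

context
  fixes T :: "'a \<Rightarrow> 'a \<Rightarrow> bool"
  assumes asym: "asymp T"
begin

private abbreviation "cw x y z w \<equiv> (of_bool (T x y \<and> T y z \<and> T z w \<and> T w x) :: nat)"

private lemma cw_revisit:
  "cw x x z w = 0" "cw x y y w = 0" "cw x y z z = 0" "cw x y z x = 0" "cw x y x w = 0" "cw x y z y = 0"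
  using asym by (auto dest: asympD)

lemma closed_walks4_at_insert_self:
  assumes "finite V"
  shows "closed_walks4_at T (insert v V) v = closed_walks4_at T V v"
  using assms by (cases "v \<in> V") (simp_all add: closed_walks4_at_def insert_absorb cw_revisit del: sum_of_bool_eq)

lemma closed_walks4_insert:
  assumes V: "finite V" "v \<notin> V"
  shows "closed_walks4 T (insert v V) = closed_walks4 T V + 4 * closed_walks4_at T V v"
proof -
  txt \<open>By \<open>cw_revisit\<close> a walk meets \<open>v\<close> at most once; each of the three families of walks
    from \<open>x \<in> V\<close> through \<open>v\<close> is a rotation of the walks starting at \<open>v\<close>.\<close>
  have split: "closed_walks4_at T (insert v V) x = closed_walks4_at T V x
      + (\<Sum>z\<in>V. \<Sum>w\<in>V. cw x v z w) + (\<Sum>y\<in>V. \<Sum>w\<in>V. cw x y v w) + (\<Sum>y\<in>V. \<Sum>z\<in>V. cw x y z v)" for x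
    using V by (simp add: closed_walks4_at_def sum.distrib cw_revisit del: sum_of_bool_eq)
  have "closed_walks4 T (insert v V) = closed_walks4_at T V v + (\<Sum>x\<in>V. closed_walks4_at T (insert v V) x)"
    using V by (simp add: closed_walks4_def closed_walks4_at_insert_self)
  also have "\<dots> = closed_walks4_at T V v + (\<Sum>x\<in>V. closed_walks4_at T V x)
      + (\<Sum>x\<in>V. \<Sum>z\<in>V. \<Sum>w\<in>V. cw x v z w) + (\<Sum>x\<in>V. \<Sum>y\<in>V. \<Sum>w\<in>V. cw x y v w)
      + (\<Sum>x\<in>V. \<Sum>y\<in>V. \<Sum>z\<in>V. cw x y z v)"
    by (simp only: split sum.distrib add.assoc)
  finally have "closed_walks4 T (insert v V) = \<dots>" .
  moreover have "(\<Sum>x\<in>V. \<Sum>z\<in>V. \<Sum>w\<in>V. cw x v z w) = closed_walks4_at T V v"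
    unfolding closed_walks4_at_def by (subst sum_rotate3) (simp add: conj_commute conj_left_commute del: sum_of_bool_eq)
  moreover have "(\<Sum>x\<in>V. \<Sum>y\<in>V. \<Sum>w\<in>V. cw x y v w) = closed_walks4_at T V v"
    unfolding closed_walks4_at_def by (subst sum_rotate3, subst sum_rotate3) (simp add: conj_commute conj_left_commute del: sum_of_bool_eq)
  moreover have "(\<Sum>x\<in>V. \<Sum>y\<in>V. \<Sum>z\<in>V. cw x y z v) = closed_walks4_at T V v"
    unfolding closed_walks4_at_def by (simp add: conj_commute conj_left_commute del: sum_of_bool_eq)
  ultimately show ?thesis
    by (simp add: closed_walks4_def)
qed

end

lemma bij_betw_pick:
  assumes "finite S"
  shows "bij_betw (pick S) {..<card S} S"
proof (rule bij_betw_imageI)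
  show "inj_on (pick S) {..<card S}"
    by (intro strict_mono_on_imp_inj_on strict_mono_onI) (simp add: pick_mono_le)
  show "pick S ` {..<card S} = S"
  proof
    show "pick S ` {..<card S} \<subseteq> S" by (auto intro: pick_in_set_le)
    show "S \<subseteq> pick S ` {..<card S}"
    proof
      fix x assume x: "x \<in> S"
      have "card {a\<in>S. a < x} < card S"
        using x assms by (intro psubset_card_mono) auto
      then show "x \<in> pick S ` {..<card S}"
        using pick_card_in_set[OF x] by (intro image_eqI[of x]) auto
    qed
  qed
qed

lemma trace_pow4:
  assumes A: "A \<in> carrier_mat n n"
  shows "trace (A ^\<^sub>m 4) = (\<Sum>i<n. \<Sum>j<n. \<Sum>k<n. \<Sum>l<n. A $$ (i,j) * A $$ (j,k) * A $$ (k,l) * A $$ (l,i))"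
proof -
  have A2: "A * A \<in> carrier_mat n n" using A by simp
  have "A ^\<^sub>m 4 = (A * A) * (A * A)"
    using A by (simp add: numeral_eq_Suc assoc_mult_mat[of _ n n _ n _ n])
  then have "trace (A ^\<^sub>m 4) = (\<Sum>i<n. \<Sum>k<n. (A * A) $$ (i,k) * (A * A) $$ (k,i))"
    using A A2 by (simp add: trace_def scalar_prod_def atLeast0LessThan del: assoc_mult_mat)
  also have "\<dots> = (\<Sum>i<n. \<Sum>k<n. \<Sum>j<n. \<Sum>l<n. A $$ (i,j) * A $$ (j,k) * (A $$ (k,l) * A $$ (l,i)))"
    using A by (simp add: scalar_prod_def atLeast0LessThan sum_product)
  also have "\<dots> = (\<Sum>i<n. \<Sum>j<n. \<Sum>k<n. \<Sum>l<n. A $$ (i,j) * A $$ (j,k) * A $$ (k,l) * A $$ (l,i))"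
    by (rule sum.cong[OF refl], rule sum.swap[THEN trans]) (simp add: mult.assoc)
  finally show ?thesis .
qed

lemma
  assumes S: "S \<subseteq> {0..<n}"
  shows adj_submatrix_carrier: "submatrix (adj_matrix n T) S S \<in> carrier_mat (card S) (card S)"
    and adj_submatrix_index: "i < card S \<Longrightarrow> j < card S \<Longrightarrow>
      submatrix (adj_matrix n T) S S $$ (i,j) = of_bool (T (pick S i) (pick S j))"
proof -
  have dims: "dim_row (adj_matrix n T) = n" "dim_col (adj_matrix n T) = n"
    by (simp_all add: adj_matrix_def)
  have rows: "{i. i < dim_row (adj_matrix n T) \<and> i \<in> S} = S"
    "{i. i < dim_col (adj_matrix n T) \<and> i \<in> S} = S"
    unfolding dims using S by auto
  show "submatrix (adj_matrix n T) S S \<in> carrier_mat (card S) (card S)"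
    unfolding carrier_mat_def mem_Collect_eq dim_submatrix rows by simp
  assume ij: "i < card S" "j < card S"
  then have "pick S i < n" "pick S j < n"
    using S pick_in_set_le[OF ij(1)] pick_in_set_le[OF ij(2)] by auto
  moreover have "submatrix (adj_matrix n T) S S $$ (i,j) = adj_matrix n T $$ (pick S i, pick S j)"
    using ij by (simp add: submatrix_index rows)
  ultimately show "submatrix (adj_matrix n T) S S $$ (i,j) = of_bool (T (pick S i) (pick S j))"
    by (simp add: adj_matrix_def)
qed

lemma trace_pow4_adj_submatrix:
  assumes S: "S \<subseteq> {0..<n}"
  shows "trace (submatrix (adj_matrix n T) S S ^\<^sub>m 4) = real (closed_walks4 T S)"
proof -
  have "finite S" by (rule finite_subset[OF S]) simp
  then have reindex: "(\<Sum>x\<in>S. f x) = (\<Sum>i<card S. f (pick S i))" for f :: "nat \<Rightarrow> real"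
    by (rule sum.reindex_bij_betw[OF bij_betw_pick, symmetric])
  show ?thesis
    by (simp add: trace_pow4[OF adj_submatrix_carrier[OF S]] adj_submatrix_index[OF S] reindex
        closed_walks4_def closed_walks4_at_def of_bool_conj mult.assoc del: sum_of_bool_eq)
qed

section \<open>Tournaments\<close>

definition in_degree :: "nat \<Rightarrow> (nat \<Rightarrow> nat \<Rightarrow> bool) \<Rightarrow> nat \<Rightarrow> nat" where
  "in_degree n T i = card {j. j < n \<and> T j i}"

lemma tournament_irrefl: "tournament n T \<Longrightarrow> i < n \<Longrightarrow> \<not> T i i"
  by (simp add: tournament_def)

lemma tournament_antisym:
  "tournament n T \<Longrightarrow> i < n \<Longrightarrow> j < n \<Longrightarrow> i \<noteq> j \<Longrightarrow> T i j \<longleftrightarrow> \<not> T j i"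
  unfolding tournament_def by blast

lemma tournament_regular_tournament: "regular_tournament n T \<Longrightarrow> tournament n T"
  by (simp add: regular_tournament_def)

lemma asymp_if_tournament:
  assumes "tournament n T" "\<And>x y. T x y \<Longrightarrow> x < n \<and> y < n"
  shows "asymp T"
proof (rule asympI)
  fix x y assume "T x y"
  then show "\<not> T y x"
    using assms tournament_irrefl[of n T x] tournament_antisym[of n T x y] by (cases "x = y") auto
qed

lemma out_degree_eq_sum: "out_degree n T i = (\<Sum>j<n. of_bool (T i j))"
  unfolding out_degree_def by (simp add: Collect_conj_eq lessThan_def)

lemma in_degree_eq_sum: "in_degree n T i = (\<Sum>j<n. of_bool (T j i))"
  unfolding in_degree_def by (simp add: Collect_conj_eq lessThan_def)

lemma out_degree_add_in_degree:
  assumes T: "tournament n T" and i: "i < n"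
  shows "out_degree n T i + in_degree n T i = n - 1"
proof -
  have "out_degree n T i + in_degree n T i = (\<Sum>j<n. of_bool (j \<noteq> i))"
    unfolding out_degree_eq_sum in_degree_eq_sum sum.distrib[symmetric]
  proof (rule sum.cong[OF refl])
    fix j assume "j \<in> {..<n}"
    then show "of_bool (T i j) + of_bool (T j i) = (of_bool (j \<noteq> i) :: nat)"
      using tournament_irrefl[OF T i] tournament_antisym[OF T i, of j] by (cases "j = i") simp_all
  qed
  also have "\<dots> = card ({..<n} - {i})"
  proof -
    have "{..<n} \<inter> {j. j \<noteq> i} = {..<n} - {i}" by auto
    then show ?thesis by simp
  qed
  also have "\<dots> = n - 1"
    using i by simp
  finally show ?thesis .
qed

lemma regular_tournament_in_degree_eq:
  assumes "regular_tournament n T" "i < n" "j < n"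
  shows "in_degree n T i = in_degree n T j"
proof -
  obtain d where d: "\<And>k. k < n \<Longrightarrow> out_degree n T k = d"
    using assms(1) unfolding regular_tournament_def by blast
  have "in_degree n T k = n - 1 - d" if "k < n" for k
    using out_degree_add_in_degree[of n T k] assms(1) d[OF that] that
    unfolding regular_tournament_def by simp
  then show ?thesis using assms(2,3) by simp
qed

text \<open>Vertex \<open>b\<close> beats \<open>b + 1, \<dots>, b + m div 2\<close> modulo \<open>m\<close>.\<close>

definition rotational_tournament :: "nat \<Rightarrow> nat \<Rightarrow> nat \<Rightarrow> bool" where
  "rotational_tournament m b d \<longleftrightarrow> b < m \<and> d < m \<and>
     (b < d \<and> d - b \<le> m div 2 \<or> d < b \<and> m div 2 < b - d)"

lemma asymp_rotational_tournament: "asymp (rotational_tournament m)"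
  by (rule asympI) (auto simp: rotational_tournament_def)

lemma tournament_rotational_tournament: "tournament m (rotational_tournament m)"
  unfolding tournament_def rotational_tournament_def by auto

lemma out_degree_rotational_tournament:
  assumes "odd m" "b < m"
  shows "out_degree m (rotational_tournament m) b = m div 2"
proof -
  have "{d. d < m \<and> rotational_tournament m b d} = {b<..min (b + m div 2) (m - 1)} \<union> {..<b - m div 2}"
    using assms by (auto simp: rotational_tournament_def)
  moreover have "card ({b<..min (b + m div 2) (m - 1)} \<union> {..<b - m div 2}) = m div 2"
    using assms by (subst card_Un_disjoint) (auto elim!: oddE)
  ultimately show ?thesis
    by (simp add: out_degree_def)
qed

lemma regular_rotational_tournament:
  assumes "odd m"
  shows "regular_tournament m (rotational_tournament m)"
  unfolding regular_tournament_def
  using tournament_rotational_tournament out_degree_rotational_tournament[OF assms] by blast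

section \<open>Lexicographic products\<close>

text \<open>Every vertex \<open>b\<close> of \<open>R\<close> is replaced by a copy of \<open>S\<close> on the vertices \<open>b * s + a\<close>, \<open>a < s\<close>.\<close>

definition lex_product :: "(nat \<Rightarrow> nat \<Rightarrow> bool) \<Rightarrow> nat \<Rightarrow> (nat \<Rightarrow> nat \<Rightarrow> bool) \<Rightarrow> nat \<Rightarrow> nat \<Rightarrow> bool" where
  "lex_product R s S x y \<longleftrightarrow>
     (if x div s = y div s then S (x mod s) (y mod s) else R (x div s) (y div s))"

lemma lex_product_blocks:
  assumes "a < s" "c < s"
  shows "lex_product R s S (b * s + a) (d * s + c) \<longleftrightarrow> (if b = d then S a c else R b d)"
  using assms by (simp add: lex_product_def)

lemma asymp_lex_product:
  assumes "asymp R" "asymp S"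
  shows "asymp (lex_product R s S)"
  using assms by (intro asympI) (auto simp: lex_product_def dest: asympD split: if_splits)

lemma sum_blocks:
  fixes m s :: nat and f :: "nat \<Rightarrow> 'a::comm_monoid_add"
  shows "(\<Sum>x<m * s. f x) = (\<Sum>b<m. \<Sum>a<s. f (b * s + a))"
proof -
  have "(\<Sum>x<m * s. f x) = (\<Sum>b<m. sum f {b * s..<b * s + s})"
    by (rule sum.nat_group[symmetric])
  also have "\<dots> = (\<Sum>b<m. \<Sum>a<s. f (b * s + a))"
    by (simp add: sum.shift_bounds_nat_ivl[of f 0 "b * s" s for b, simplified] atLeast0LessThan add.commute)
  finally show ?thesis .
qed

lemma block_decomp:
  fixes x m s :: nat
  assumes "x < m * s"
  obtains b a where "x = b * s + a" "b < m" "a < s"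
proof
  show "x = x div s * s + x mod s" by simp
  show "x div s < m" using assms by (simp add: less_mult_imp_div_less)
  show "x mod s < s" using assms by (cases "s = 0") auto
qed

lemma tournament_lex_product:
  assumes R: "tournament m R" and S: "tournament s S"
  shows "tournament (m * s) (lex_product R s S)"
  unfolding tournament_def
proof (intro conjI allI impI)
  fix x assume "x < m * s"
  then obtain b a where "x = b * s + a" "b < m" "a < s" by (rule block_decomp)
  then show "\<not> lex_product R s S x x"
    using tournament_irrefl[OF S] by (simp add: lex_product_blocks)
next
  fix x y assume "x < m * s" "y < m * s" "x \<noteq> y"
  moreover obtain b a where x: "x = b * s + a" "b < m" "a < s" by (rule block_decomp[OF \<open>x < m * s\<close>])
  moreover obtain d c where y: "y = d * s + c" "d < m" "c < s" by (rule block_decomp[OF \<open>y < m * s\<close>])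
  ultimately show "lex_product R s S x y \<longleftrightarrow> \<not> lex_product R s S y x"
    using tournament_antisym[OF R, of b d] tournament_antisym[OF S, of a c]
    by (cases "b = d") (simp_all add: lex_product_blocks)
qed

lemma out_degree_lex_product:
  assumes R: "tournament m R" and b: "b < m" and a: "a < s"
  shows "out_degree (m * s) (lex_product R s S) (b * s + a) = s * out_degree m R b + out_degree s S a"
proof -
  have "out_degree (m * s) (lex_product R s S) (b * s + a)
      = (\<Sum>d<m. \<Sum>c<s. of_bool (if b = d then S a c else R b d))"
    using a by (simp add: out_degree_eq_sum sum_blocks lex_product_blocks)
  also have "\<dots> = (\<Sum>d<m. s * of_bool (R b d) + (if d = b then out_degree s S a else 0))"
    using tournament_irrefl[OF R b] by (intro sum.cong) (auto simp: out_degree_eq_sum)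
  also have "\<dots> = s * out_degree m R b + out_degree s S a"
    using b by (simp add: sum.distrib sum_distrib_left out_degree_eq_sum)
  finally show ?thesis .
qed

lemma regular_lex_product:
  assumes R: "regular_tournament m R" and S: "regular_tournament s S"
  shows "regular_tournament (m * s) (lex_product R s S)"
proof -
  obtain dR dS where dR: "\<And>b. b < m \<Longrightarrow> out_degree m R b = dR"
    and dS: "\<And>a. a < s \<Longrightarrow> out_degree s S a = dS"
    using R S unfolding regular_tournament_def by metis
  have "out_degree (m * s) (lex_product R s S) x = s * dR + dS" if x: "x < m * s" for x
  proof -
    obtain b a where "x = b * s + a" "b < m" "a < s" by (rule block_decomp[OF x])
    then show ?thesis
      using R dR dS out_degree_lex_product unfolding regular_tournament_def by simp
  qed
  then show ?thesis
    using R S tournament_lex_product unfolding regular_tournament_def by blast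
qed

lemma walks2_lex_product_same_block:
  assumes R: "tournament m R" and b: "b < m" and a: "a < s" and c: "c < s"
  shows "walks2 (lex_product R s S) {..<m * s} (b * s + a) (b * s + c) = walks2 S {..<s} a c"
proof -
  have "walks2 (lex_product R s S) {..<m * s} (b * s + a) (b * s + c)
      = (\<Sum>d<m. if d = b then walks2 S {..<s} a c else 0)"
    unfolding walks2_def sum_blocks
  proof (rule sum.cong[OF refl])
    fix d assume d: "d \<in> {..<m}"
    have "\<not> (R b d \<and> R d b)"
      using tournament_antisym[OF R b, of d] tournament_irrefl[OF R b] d by (cases "d = b") auto
    then show "(\<Sum>c'<s. of_bool (lex_product R s S (b * s + a) (d * s + c') \<and>
        lex_product R s S (d * s + c') (b * s + c)))
      = (if d = b then (\<Sum>c'<s. of_bool (S a c' \<and> S c' c)) else 0)"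
      using a c by (auto simp: lex_product_blocks)
  qed
  also have "\<dots> = walks2 S {..<s} a c"
    using b by simp
  finally show ?thesis .
qed

lemma walks2_lex_product_other_block:
  assumes R: "tournament m R" and b: "b < m" and d: "d < m" and bd: "b \<noteq> d"
    and a: "a < s" and c: "c < s"
  shows "walks2 (lex_product R s S) {..<m * s} (b * s + a) (d * s + c)
    = s * walks2 R {..<m} b d + of_bool (R b d) * (out_degree s S a + in_degree s S c)"
proof -
  have "walks2 (lex_product R s S) {..<m * s} (b * s + a) (d * s + c)
      = (\<Sum>e<m. (if e = b then of_bool (R b d) * out_degree s S a else 0)
          + (if e = d then of_bool (R b d) * in_degree s S c else 0)
          + s * of_bool (R b e \<and> R e d))"
    unfolding walks2_def sum_blocks
  proof (rule sum.cong[OF refl])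
    fix e assume "e \<in> {..<m}"
    show "(\<Sum>c'<s. of_bool (lex_product R s S (b * s + a) (e * s + c') \<and>
        lex_product R s S (e * s + c') (d * s + c)))
      = (if e = b then of_bool (R b d) * out_degree s S a else 0)
          + (if e = d then of_bool (R b d) * in_degree s S c else 0)
          + s * of_bool (R b e \<and> R e d)"
      using a c bd tournament_irrefl[OF R b] tournament_irrefl[OF R d]
      by (simp add: lex_product_blocks out_degree_eq_sum in_degree_eq_sum sum_distrib_left mult.commute)
  qed
  also have "\<dots> = s * walks2 R {..<m} b d + of_bool (R b d) * (out_degree s S a + in_degree s S c)"
    using b d by (simp add: sum.distrib walks2_def sum_distrib_left algebra_simps)
  finally show ?thesis .
qed

lemma closed_walks4_at_lex_product:
  assumes R: "tournament m R" and S: "regular_tournament s S"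
    and b: "b < m" and a: "a < s" and a': "a' < s"
  shows "closed_walks4_at (lex_product R s S) {..<m * s} (b * s + a) + closed_walks4_at S {..<s} a'
       = closed_walks4_at (lex_product R s S) {..<m * s} (b * s + a') + closed_walks4_at S {..<s} a"
proof -
  txt \<open>Only the walks staying in the block of \<open>b\<close> depend on \<open>a\<close> itself; the others see \<open>a\<close>
    only through its out- and in-degree, which regularity of \<open>S\<close> makes independent of \<open>a\<close>.\<close>
  let ?W = "walks2 (lex_product R s S) {..<m * s}"
  define rest where "rest x = (\<Sum>d\<in>{..<m} - {b}. \<Sum>c<s. ?W (b * s + x) (d * s + c) * ?W (d * s + c) (b * s + x))"
    for x
  have split: "closed_walks4_at (lex_product R s S) {..<m * s} (b * s + x)
      = closed_walks4_at S {..<s} x + rest x" if x: "x < s" for x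
  proof -
    have "closed_walks4_at (lex_product R s S) {..<m * s} (b * s + x)
        = (\<Sum>d<m. \<Sum>c<s. ?W (b * s + x) (d * s + c) * ?W (d * s + c) (b * s + x))"
      by (simp add: closed_walks4_at_eq_walks2 sum_blocks)
    also have "\<dots> = (\<Sum>c<s. ?W (b * s + x) (b * s + c) * ?W (b * s + c) (b * s + x)) + rest x"
      unfolding rest_def using b by (simp add: sum.remove)
    also have "(\<Sum>c<s. ?W (b * s + x) (b * s + c) * ?W (b * s + c) (b * s + x)) = closed_walks4_at S {..<s} x"
      using R b x by (simp add: walks2_lex_product_same_block closed_walks4_at_eq_walks2)
    finally show ?thesis .
  qed
  have out: "out_degree s S a = out_degree s S a'"
    using S a a' unfolding regular_tournament_def by metis
  have "in_degree s S a = in_degree s S a'"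
    by (rule regular_tournament_in_degree_eq[OF S a a'])
  then have "rest a = rest a'"
    unfolding rest_def using R b a a' out
    by (intro sum.cong refl) (simp add: walks2_lex_product_other_block)
  then show ?thesis
    using split[OF a] split[OF a'] by simp
qed

text \<open>A regular 7-tournament that is not vertex-transitive: see \<open>closed_walks4_at_tournament7\<close>.\<close>

definition tournament7 :: "nat \<Rightarrow> nat \<Rightarrow> bool" where
  "tournament7 a c \<longleftrightarrow> (a, c) \<in> {(0,2), (0,5), (0,6), (1,0), (1,5), (1,6), (2,1), (2,4), (2,6),
     (3,0), (3,1), (3,2), (4,0), (4,1), (4,3), (5,2), (5,3), (5,4), (6,3), (6,4), (6,5)}"

lemma sum_lessThan_7:
  fixes f :: "nat \<Rightarrow> 'a::comm_monoid_add"
  shows "(\<Sum>i<7. f i) = f 0 + f 1 + f 2 + f 3 + f 4 + f 5 + f 6"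
  by (simp add: numeral_eq_Suc add.assoc)

lemma all_less_7: "(\<forall>i<7. P i) \<longleftrightarrow> P 0 \<and> P 1 \<and> P 2 \<and> P 3 \<and> P 4 \<and> P 5 \<and> P (6::nat)"
  by (simp add: numeral_eq_Suc All_less_Suc conj_ac)

lemma regular_tournament7: "regular_tournament 7 tournament7"
proof -
  have "tournament 7 tournament7"
    unfolding tournament_def all_less_7 by (simp add: tournament7_def)
  moreover have "\<forall>i<7. out_degree 7 tournament7 i = 3"
    unfolding all_less_7 by (simp add: out_degree_eq_sum sum_lessThan_7 tournament7_def)
  ultimately show ?thesis
    unfolding regular_tournament_def by blast
qed

lemma asymp_tournament7: "asymp tournament7"
  by (rule asymp_if_tournament[OF tournament_regular_tournament[OF regular_tournament7]])
    (auto simp: tournament7_def)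

lemma closed_walks4_at_tournament7:
  "closed_walks4_at tournament7 {..<7} 0 = 14" "closed_walks4_at tournament7 {..<7} 2 = 12"
  by (simp_all add: closed_walks4_at_eq_walks2 walks2_def sum_lessThan_7 tournament7_def)

lemma not_spectrally_monomorphic_if_closed_walks4_at_differ:
  assumes T: "asymp T" and u: "u < n" and v: "v < n"
    and differ: "closed_walks4_at T {..<n} u \<noteq> closed_walks4_at T {..<n} v"
  shows "\<not> spectrally_monomorphic (n - 1) n T"
proof
  assume mono: "spectrally_monomorphic (n - 1) n T"
  have deletion: "closed_walks4 T ({..<n} - {x}) + 4 * closed_walks4_at T {..<n} x = closed_walks4 T {..<n}"
    if x: "x < n" for x
  proof -
    have "insert x ({..<n} - {x}) = {..<n}" using x by auto
    then show ?thesis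
      using closed_walks4_insert[OF T, of "{..<n} - {x}" x]
        closed_walks4_at_insert_self[OF T, of "{..<n} - {x}" x] by simp
  qed
  have sub: "{..<n} - {x} \<subseteq> {0..<n}" and card: "card ({..<n} - {x}) = n - 1" if "x < n" for x
    using that by auto
  have "char_poly (submatrix (adj_matrix n T) ({..<n} - {u}) ({..<n} - {u}))
      = char_poly (submatrix (adj_matrix n T) ({..<n} - {v}) ({..<n} - {v}))"
    using mono sub card u v unfolding spectrally_monomorphic_def by blast
  then have "trace (submatrix (adj_matrix n T) ({..<n} - {u}) ({..<n} - {u}) ^\<^sub>m 4)
      = trace (submatrix (adj_matrix n T) ({..<n} - {v}) ({..<n} - {v}) ^\<^sub>m 4)"
    using adj_submatrix_carrier[OF sub] card u v by (intro trace_pow_eq_if_char_poly_eq) auto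
  then have "closed_walks4 T ({..<n} - {u}) = closed_walks4 T ({..<n} - {v})"
    using trace_pow4_adj_submatrix[OF sub] u v by simp
  then show False
    using deletion[OF u] deletion[OF v] differ by simp
qed

theorem theorem1p2:
  fixes k n :: nat
  assumes "n = 3 ^ k * 7"
  shows "\<exists>T. regular_tournament n T \<and> \<not> spectrally_monomorphic (n - 1) n T"
proof (intro exI conjI)
  let ?m = "3 ^ k :: nat"
  let ?T = "lex_product (rotational_tournament ?m) 7 tournament7"
  have odd: "odd ?m" by simp
  show "regular_tournament n ?T"
    unfolding assms by (rule regular_lex_product[OF regular_rotational_tournament[OF odd] regular_tournament7])
  have "closed_walks4_at ?T {..<?m * 7} (0 * 7 + 0) + 12 = closed_walks4_at ?T {..<?m * 7} (0 * 7 + 2) + 14"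
    using closed_walks4_at_lex_product[OF tournament_rotational_tournament regular_tournament7, of 0 ?m 0 2]
    unfolding closed_walks4_at_tournament7 by simp
  then have "closed_walks4_at ?T {..<n} 0 \<noteq> closed_walks4_at ?T {..<n} 2"
    unfolding assms mult_zero_left add_0 by linarith
  moreover have "2 < n"
    using assms one_le_power[of "3::nat" k] by linarith
  ultimately show "\<not> spectrally_monomorphic (n - 1) n ?T"
    using asymp_lex_product[OF asymp_rotational_tournament asymp_tournament7]
    by (intro not_spectrally_monomorphic_if_closed_walks4_at_differ) auto
qed

end
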